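(* There exist absolute constants $c>0$ and $n_0$ such that the following holds for every $n\ge n_0$ that is a power of $2$. Let $L=\log_2 n$ and let $T_1,\dots,T_n$ be drawn independently and uniformly at random from the $L$-element subsets of $[n]$. For $x\in\{0,1\}^n$ let $N_T(x) := \#\{ i\in[n] : x_j = 1 \text{ for all } j\in T_i\}$. Then $\mathbb{E}_{T_1,\dots,T_n}\Big[\Pr_{\mathbf{x}\sim\{0,1\}^n}[N_T(\mathbf{x}) = 1]\Big] \ge c$, where $\mathbf{x}$ is uniform on $\{0,1\}^n$. In particular, there exists a choice of $T_1,\dots,T_n$ with $\Pr_{\mathbf{x}}[N_T(\mathbf{x})=1]\ge c$. *)

theory Defs
  imports Complex_Main "HOL-Library.FuncSet"
begin

text \<open>Index set [n] is rendered as {0..<n}. A point x of {0,1}^n is a function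
  {0..<n} \<rightarrow> bool (extensional), with x j = True meaning x_j = 1.\<close>

definition cube :: "nat \<Rightarrow> (nat \<Rightarrow> bool) set" where
  "cube n = {0..<n} \<rightarrow>\<^sub>E (UNIV :: bool set)"

definition subsets_card :: "nat \<Rightarrow> nat \<Rightarrow> nat set set" where
  "subsets_card n L = {S. S \<subseteq> {0..<n} \<and> card S = L}"

definition set_tuples :: "nat \<Rightarrow> nat \<Rightarrow> (nat \<Rightarrow> nat set) set" where
  "set_tuples n L = {0..<n} \<rightarrow>\<^sub>E subsets_card n L"

definition N_T :: "nat \<Rightarrow> (nat \<Rightarrow> nat set) \<Rightarrow> (nat \<Rightarrow> bool) \<Rightarrow> nat" where
  "N_T n T x = card {i \<in> {0..<n}. \<forall>j \<in> T i. x j}"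

definition prob_unique :: "nat \<Rightarrow> (nat \<Rightarrow> nat set) \<Rightarrow> real" where
  "prob_unique n T = real (card {x \<in> cube n. N_T n T x = 1}) / real (card (cube n))"

definition expected_prob_unique :: "nat \<Rightarrow> nat \<Rightarrow> real" where
  "expected_prob_unique n L =
     (\<Sum>T \<in> set_tuples n L. prob_unique n T) / real (card (set_tuples n L))"

end

theory Submission
  imports Defs
begin

(* Fix x of Hamming weight w. The events "T_i lies inside the support of x" are independent with
   probability p = C(w,L) / C(n,L), so Pr_T[N_T(x) = 1] = n p (1 - p)^(n-1). If
   n/2 <= w <= (n/2)(1 + 1/L), then n p lies in [1/2, 3] (here n = 2^L is used), which makes this
   probability at least 1/512; by Chebyshev's inequality at least a quarter of all x have such a
   weight. Hence the expectation is at least 1/2048, and some tuple T attains the average. *)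

lemma card_PiE_filter_card_eq_1:
  assumes fI: "finite I" and GS: "G \<subseteq> S" and fS: "finite S"
  shows "card {T \<in> I \<rightarrow>\<^sub>E S. card {i\<in>I. T i \<in> G} = 1}
         = card I * card G * (card S - card G) ^ (card I - 1)"
proof -
  define F where "F i = PiE I (\<lambda>j. if j = i then G else S - G)" for i
  have union: "{T \<in> I \<rightarrow>\<^sub>E S. card {i\<in>I. T i \<in> G} = 1} = (\<Union>i\<in>I. F i)"
  proof (intro equalityI subsetI)
    fix T assume "T \<in> {T \<in> I \<rightarrow>\<^sub>E S. card {i\<in>I. T i \<in> G} = 1}"
    then obtain i where T: "T \<in> I \<rightarrow>\<^sub>E S" and i: "{j\<in>I. T j \<in> G} = {i}"
      by (auto simp: card_Suc_eq)
    then have "T \<in> F i" "i \<in> I" unfolding F_def by (auto simp: PiE_iff)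
    then show "T \<in> (\<Union>i\<in>I. F i)" by blast
  next
    fix T assume "T \<in> (\<Union>i\<in>I. F i)"
    then obtain i where i: "i \<in> I" "T \<in> F i" by blast
    then have "{j\<in>I. T j \<in> G} = {i}" "T \<in> I \<rightarrow>\<^sub>E S"
      using GS unfolding F_def by (auto simp: PiE_iff split: if_splits)
    then show "T \<in> {T \<in> I \<rightarrow>\<^sub>E S. card {i\<in>I. T i \<in> G} = 1}" by simp
  qed
  have fG: "finite G" using GS fS finite_subset by blast
  have card_F: "card (F i) = card G * (card S - card G) ^ (card I - 1)" if "i \<in> I" for i
  proof -
    have "card (F i) = card G * (\<Prod>j\<in>I - {i}. card (if j = i then G else S - G))"
      unfolding F_def using fI that by (simp add: card_PiE prod.remove)
    also have "(\<Prod>j\<in>I - {i}. card (if j = i then G else S - G)) = (\<Prod>j\<in>I - {i}. card (S - G))"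
      by (rule prod.cong) auto
    finally show ?thesis
      using fI that GS fG by (simp add: card_Diff_subset)
  qed
  have "card (\<Union>i\<in>I. F i) = (\<Sum>i\<in>I. card (F i))"
  proof (rule card_UN_disjoint[OF fI])
    show "\<forall>i\<in>I. finite (F i)" unfolding F_def using fI fS fG by (auto intro!: finite_PiE)
    show "\<forall>i\<in>I. \<forall>j\<in>I. i \<noteq> j \<longrightarrow> F i \<inter> F j = {}"
      unfolding F_def by (auto simp: PiE_iff) (metis Diff_iff)
  qed
  then show ?thesis using union card_F by simp
qed

lemma sum_card_filter_swap:
  assumes "finite A" "finite B"
  shows "(\<Sum>a\<in>A. card {b\<in>B. P a b}) = (\<Sum>b\<in>B. card {a\<in>A. P a b})"
proof -
  have "(\<Sum>a\<in>A. card {b\<in>B. P a b}) = (\<Sum>a\<in>A. \<Sum>b\<in>B. if P a b then 1 else 0)"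
    using assms by (simp add: sum.inter_filter[symmetric])
  also have "\<dots> = (\<Sum>b\<in>B. \<Sum>a\<in>A. if P a b then 1 else 0)" by (rule sum.swap)
  finally show ?thesis
    using assms by (simp add: sum.inter_filter[symmetric])
qed

lemma card_subsets_with_card_pred:
  assumes "finite I"
  shows "card {W. W \<subseteq> I \<and> P (card W)} = (\<Sum>w | w \<le> card I \<and> P w. card I choose w)"
proof -
  have "{W. W \<subseteq> I \<and> P (card W)} = (\<Union>w\<in>{w. w \<le> card I \<and> P w}. {W. W \<subseteq> I \<and> card W = w})"
    using assms by (auto intro: card_mono)
  moreover have "card (\<Union>w\<in>{w. w \<le> card I \<and> P w}. {W. W \<subseteq> I \<and> card W = w})
        = (\<Sum>w | w \<le> card I \<and> P w. card {W. W \<subseteq> I \<and> card W = w})"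
    by (rule card_UN_disjoint) (use assms in auto)
  ultimately show ?thesis using assms by (simp add: n_subsets)
qed

definition hamming_weight :: "nat \<Rightarrow> (nat \<Rightarrow> bool) \<Rightarrow> nat" where
  "hamming_weight n x = card {j\<in>{0..<n}. x j}"

lemma hamming_weight_le: "hamming_weight n x \<le> n"
  unfolding hamming_weight_def by (rule order.trans[OF card_mono[of "{0..<n}"]]) auto

lemma finite_cube: "finite (cube n)"
  unfolding cube_def by (intro finite_PiE) auto

lemma card_cube: "card (cube n) = 2 ^ n"
  unfolding cube_def by (simp add: card_PiE)

lemma bij_betw_cube_Pow: "bij_betw (\<lambda>x. {j\<in>{0..<n}. x j}) (cube n) (Pow {0..<n})"
proof (rule bij_betwI[where g = "\<lambda>W. restrict (\<lambda>j. j \<in> W) {0..<n}"])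
  show "(\<lambda>x. {j\<in>{0..<n}. x j}) \<in> cube n \<rightarrow> Pow {0..<n}" by auto
  show "(\<lambda>W. restrict (\<lambda>j. j \<in> W) {0..<n}) \<in> Pow {0..<n} \<rightarrow> cube n"
    unfolding cube_def by auto
  show "restrict (\<lambda>j. j \<in> {j\<in>{0..<n}. x j}) {0..<n} = x" if "x \<in> cube n" for x
    using that unfolding cube_def by (intro ext) (simp add: PiE_iff extensional_def)
  show "{j\<in>{0..<n}. restrict (\<lambda>j. j \<in> W) {0..<n} j} = W" if "W \<in> Pow {0..<n}" for W
    using that by auto
qed

lemma card_cube_hamming_weight:
  "card {x\<in>cube n. P (hamming_weight n x)} = (\<Sum>w | w \<le> n \<and> P w. n choose w)"
proof -
  have "bij_betw (\<lambda>x. {j\<in>{0..<n}. x j}) {x\<in>cube n. P (hamming_weight n x)} {W\<in>Pow {0..<n}. P (card W)}"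
    unfolding hamming_weight_def by (rule bij_betw_Collect[OF bij_betw_cube_Pow]) (rule refl)
  then have "card {x\<in>cube n. P (hamming_weight n x)} = card {W\<in>Pow {0..<n}. P (card W)}"
    by (rule bij_betw_same_card)
  also have "{W\<in>Pow {0..<n}. P (card W)} = {W. W \<subseteq> {0..<n} \<and> P (card W)}" by auto
  also have "card \<dots> = (\<Sum>w | w \<le> card {0..<n} \<and> P w. card {0..<n} choose w)"
    by (rule card_subsets_with_card_pred) simp
  finally show ?thesis by (simp only: card_atLeastLessThan diff_zero)
qed

lemma card_subsets_card: "card (subsets_card n k) = n choose k"
  unfolding subsets_card_def using n_subsets[of "{0..<n}" k] by simp

lemma finite_subsets_card: "finite (subsets_card n k)"
  unfolding subsets_card_def by (rule finite_subset[of _ "Pow {0..<n}"]) auto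

lemma finite_set_tuples: "finite (set_tuples n k)"
  unfolding set_tuples_def by (intro finite_PiE finite_subsets_card) simp

lemma card_set_tuples: "card (set_tuples n k) = (n choose k) ^ n"
  unfolding set_tuples_def by (simp add: card_PiE card_subsets_card)

lemma set_tuples_nonempty: "k \<le> n \<Longrightarrow> set_tuples n k \<noteq> {}"
proof -
  assume "k \<le> n"
  then have "{0..<k} \<in> subsets_card n k" unfolding subsets_card_def by auto
  then show ?thesis unfolding set_tuples_def by (auto simp: PiE_eq_empty_iff)
qed

lemma card_set_tuples_N_T_eq_1:
  "card {T\<in>set_tuples n k. N_T n T x = 1}
   = n * (hamming_weight n x choose k) * ((n choose k) - (hamming_weight n x choose k)) ^ (n - 1)"
proof -
  define G where "G = {U\<in>subsets_card n k. \<forall>j\<in>U. x j}"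
  have "G = {U. U \<subseteq> {j\<in>{0..<n}. x j} \<and> card U = k}"
    unfolding G_def subsets_card_def by auto
  then have card_G: "card G = hamming_weight n x choose k"
    unfolding hamming_weight_def by (simp add: n_subsets)
  have "{i\<in>{0..<n}. \<forall>j\<in>T i. x j} = {i\<in>{0..<n}. T i \<in> G}" if "T \<in> set_tuples n k" for T
    using that unfolding G_def set_tuples_def by (auto simp: PiE_iff)
  then have "{T\<in>set_tuples n k. N_T n T x = 1}
      = {T \<in> {0..<n} \<rightarrow>\<^sub>E subsets_card n k. card {i\<in>{0..<n}. T i \<in> G} = 1}"
    unfolding N_T_def set_tuples_def by auto
  also have "card \<dots> = n * card G * (card (subsets_card n k) - card G) ^ (n - 1)"
    using card_PiE_filter_card_eq_1[of "{0..<n}" G "subsets_card n k"]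
    by (simp add: G_def finite_subsets_card)
  finally show ?thesis by (simp only: card_G card_subsets_card)
qed

definition hit_prob :: "nat \<Rightarrow> nat \<Rightarrow> (nat \<Rightarrow> bool) \<Rightarrow> real" where
  "hit_prob n k x = real (hamming_weight n x choose k) / real (n choose k)"

lemma expected_prob_unique_eq:
  assumes "k \<le> n"
  shows "expected_prob_unique n k =
    (\<Sum>x\<in>cube n. real n * hit_prob n k x * (1 - hit_prob n k x) ^ (n - 1)) / 2 ^ n"
proof -
  define C where "C = n choose k"
  have C_pos: "0 < C" unfolding C_def using assms by simp
  have summand: "real (card {T\<in>set_tuples n k. N_T n T x = 1})
      = real C ^ n * (real n * hit_prob n k x * (1 - hit_prob n k x) ^ (n - 1))" for x
  proof (cases n)
    case (Suc n')
    define A where "A = hamming_weight n x choose k"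
    have "A \<le> C"
      unfolding A_def C_def using hamming_weight_le by (rule binomial_right_mono)
    have "real (n * A * (C - A) ^ (n - 1)) = real C ^ n * (real n * (A / C) * ((C - A) / C) ^ (n - 1))"
      using C_pos Suc by (simp add: power_divide field_simps)
    also have "(C - A) / C = 1 - A / C" using C_pos \<open>A \<le> C\<close> by (simp add: field_simps of_nat_diff)
    finally show ?thesis
      unfolding card_set_tuples_N_T_eq_1 hit_prob_def A_def C_def by simp
  qed (use card_set_tuples_N_T_eq_1[of 0 k x] in simp)
  have "(\<Sum>T\<in>set_tuples n k. prob_unique n T)
      = (\<Sum>T\<in>set_tuples n k. real (card {x\<in>cube n. N_T n T x = 1})) / 2 ^ n"
    unfolding prob_unique_def card_cube by (simp add: sum_divide_distrib)
  also have "\<dots> = (\<Sum>x\<in>cube n. real (card {T\<in>set_tuples n k. N_T n T x = 1})) / 2 ^ n"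
    using sum_card_filter_swap[OF finite_set_tuples finite_cube, where P = "\<lambda>T x. N_T n T x = 1"]
    by (simp only: of_nat_sum[symmetric])
  also have "\<dots> = real C ^ n * (\<Sum>x\<in>cube n. real n * hit_prob n k x * (1 - hit_prob n k x) ^ (n - 1)) / 2 ^ n"
    by (simp only: summand sum_distrib_left)
  finally show ?thesis
    unfolding expected_prob_unique_def card_set_tuples C_def[symmetric] using C_pos by simp
qed

lemma sum_mult_binomial: "(\<Sum>i\<le>n. real i * real (n choose i)) = real n * 2 ^ n / 2"
proof -
  have "(\<Sum>i\<le>n. real i * real (n choose i)) = real n * 2 ^ (n - 1)"
    using arg_cong[OF choose_linear_sum[of n], of real] by simp
  then show ?thesis by (cases n) auto
qed

lemma sum_square_mult_binomial:
  "(\<Sum>i\<le>n. real i ^ 2 * real (n choose i)) = real n * (real n + 1) * 2 ^ n / 4"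
proof (cases n)
  case (Suc a)
  have "(\<Sum>i\<le>Suc a. real i ^ 2 * real (Suc a choose i))
      = (\<Sum>i\<le>a. real (Suc i) ^ 2 * real (Suc a choose Suc i))"
    by (simp only: sum.atMost_Suc_shift) simp
  also have "\<dots> = (\<Sum>i\<le>a. real (Suc a) * (real i * real (a choose i) + real (a choose i)))"
  proof (rule sum.cong[OF refl])
    fix i
    have "real (Suc i) * real (Suc a choose Suc i) = real (Suc a) * real (a choose i)"
      using Suc_times_binomial_eq[of a i] by (metis mult.commute of_nat_mult)
    then have "real (Suc i) ^ 2 * real (Suc a choose Suc i) = real (Suc i) * (real (Suc a) * real (a choose i))"
      by (simp only: power2_eq_square mult.assoc)
    then show "real (Suc i) ^ 2 * real (Suc a choose Suc i)
        = real (Suc a) * (real i * real (a choose i) + real (a choose i))"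
      by (simp add: algebra_simps)
  qed
  also have "\<dots> = real (Suc a) * (real a * 2 ^ a / 2 + 2 ^ a)"
    using sum_mult_binomial[of a] arg_cong[OF choose_row_sum[of a], of real]
    by (simp add: sum_distrib_left[symmetric] sum.distrib)
  also have "\<dots> = real (Suc a) * (real (Suc a) + 1) * 2 ^ Suc a / 4"
    by (simp add: field_simps)
  finally show ?thesis using Suc by simp
qed simp

lemma binomial_central_second_moment:
  "(\<Sum>i\<le>2*m. (real i - real m) ^ 2 * real (2*m choose i)) = real m * 2 ^ (2*m) / 2"
proof -
  have row: "(\<Sum>i\<le>2*m. real (2*m choose i)) = 2 ^ (2*m)"
    using arg_cong[OF choose_row_sum[of "2*m"], of real] by simp
  have "(\<Sum>i\<le>2*m. (real i - real m) ^ 2 * real (2*m choose i))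
     = (\<Sum>i\<le>2*m. real i ^ 2 * real (2*m choose i)) - 2 * real m * (\<Sum>i\<le>2*m. real i * real (2*m choose i))
        + real m ^ 2 * (\<Sum>i\<le>2*m. real (2*m choose i))"
    by (simp add: power2_eq_square algebra_simps sum.distrib sum_subtractf sum_distrib_left)
  also have "\<dots> = real m * 2 ^ (2*m) / 2"
    unfolding sum_square_mult_binomial sum_mult_binomial row by (simp add: algebra_simps power2_eq_square)
  finally show ?thesis .
qed

lemma sum_binomial_upper_half: "2 ^ (2*m) \<le> 2 * (\<Sum>i\<in>{m..2*m}. real (2*m choose i))"
proof -
  have "(\<Sum>i<m. real (2*m choose i)) = (\<Sum>i<m. real (2*m choose (2*m - i)))"
    by (rule sum.cong) (auto simp: binomial_symmetric[symmetric])
  also have "\<dots> = (\<Sum>j\<in>(\<lambda>i. 2*m - i) ` {..<m}. real (2*m choose j))"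
    by (rule sum.reindex[symmetric, unfolded comp_def]) (auto simp: inj_on_def)
  also have "\<dots> \<le> (\<Sum>i\<in>{m..2*m}. real (2*m choose i))"
    by (rule sum_mono2) auto
  finally have lower_le_upper: "(\<Sum>i<m. real (2*m choose i)) \<le> (\<Sum>i\<in>{m..2*m}. real (2*m choose i))" .
  have "2 ^ (2*m) = (\<Sum>i\<le>2*m. real (2*m choose i))"
    using arg_cong[OF choose_row_sum[of "2*m"], of real] by simp
  also have "{..2*m} = {..<m} \<union> {m..2*m}" by auto
  also have "(\<Sum>i\<in>{..<m} \<union> {m..2*m}. real (2*m choose i))
      = (\<Sum>i<m. real (2*m choose i)) + (\<Sum>i\<in>{m..2*m}. real (2*m choose i))"
    by (rule sum.union_disjoint) auto
  finally have "2 ^ (2*m) = (\<Sum>i<m. real (2*m choose i)) + (\<Sum>i\<in>{m..2*m}. real (2*m choose i))" .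
  then show ?thesis using lower_le_upper by linarith
qed

lemma sum_binomial_upper_tail:
  assumes "0 < t"
  shows "(\<Sum>i | real m + t < real i \<and> i \<le> 2*m. real (2*m choose i)) * t ^ 2 \<le> real m * 2 ^ (2*m) / 2"
proof -
  have "(\<Sum>i | real m + t < real i \<and> i \<le> 2*m. real (2*m choose i)) * t ^ 2
      \<le> (\<Sum>i | real m + t < real i \<and> i \<le> 2*m. (real i - real m) ^ 2 * real (2*m choose i))"
    unfolding sum_distrib_right
  proof (rule sum_mono)
    fix i assume "i \<in> {i. real m + t < real i \<and> i \<le> 2*m}"
    then have "t ^ 2 \<le> (real i - real m) ^ 2" using assms by (intro power_mono) auto
    then show "real (2*m choose i) * t ^ 2 \<le> (real i - real m) ^ 2 * real (2*m choose i)"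
      by (metis mult.commute mult_right_mono of_nat_0_le_iff)
  qed
  also have "\<dots> \<le> (\<Sum>i\<le>2*m. (real i - real m) ^ 2 * real (2*m choose i))"
    by (rule sum_mono2) auto
  finally show ?thesis unfolding binomial_central_second_moment .
qed

(* Chebyshev's inequality for the symmetric binomial distribution, restricted to the upper half. *)
lemma sum_binomial_window_ge:
  assumes "0 < t"
  shows "2 ^ (2*m) / 2 - real m * 2 ^ (2*m) / (2 * t ^ 2)
    \<le> (\<Sum>i | m \<le> i \<and> i \<le> 2*m \<and> real i \<le> real m + t. real (2*m choose i))"
proof -
  let ?window = "{i. m \<le> i \<and> i \<le> 2*m \<and> real i \<le> real m + t}"
  let ?tail = "{i. real m + t < real i \<and> i \<le> 2*m}"
  have "{m..2*m} = ?window \<union> ?tail" using assms by auto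
  then have "(\<Sum>i\<in>{m..2*m}. real (2*m choose i)) = (\<Sum>i\<in>?window \<union> ?tail. real (2*m choose i))"
    by (simp only:)
  also have "\<dots> = (\<Sum>i\<in>?window. real (2*m choose i)) + (\<Sum>i\<in>?tail. real (2*m choose i))"
    by (rule sum.union_disjoint) auto
  moreover have "(\<Sum>i\<in>?tail. real (2*m choose i)) \<le> real m * 2 ^ (2*m) / (2 * t ^ 2)"
    using sum_binomial_upper_tail[OF assms, of m] assms by (simp add: field_simps)
  ultimately show ?thesis using sum_binomial_upper_half[of m] by linarith
qed

lemma card_cube_near_half_weight_ge:
  assumes "0 < k" "4 * k ^ 2 \<le> 2 * m"
  shows "2 ^ (2*m) / 4 \<le> real (card {x\<in>cube (2*m).
    m \<le> hamming_weight (2*m) x \<and> real (hamming_weight (2*m) x) \<le> real m + real m / real k})"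
proof -
  define t where "t = real m / real k"
  have "0 < m" using assms by (cases m) auto
  then have t_pos: "0 < t" unfolding t_def using assms by simp
  have "real k ^ 2 / (2 * real m) \<le> 1/4"
    using assms(2) \<open>0 < m\<close> by (simp add: field_simps flip: of_nat_power)
  then have tail_small: "real m * 2 ^ (2*m) / (2 * t ^ 2) \<le> 2 ^ (2*m) / 4"
    unfolding t_def using assms \<open>0 < m\<close> by (simp add: field_simps power2_eq_square)
  have "card {x\<in>cube (2*m). m \<le> hamming_weight (2*m) x \<and> real (hamming_weight (2*m) x) \<le> real m + t}
      = (\<Sum>w | w \<le> 2*m \<and> m \<le> w \<and> real w \<le> real m + t. 2*m choose w)"
    by (rule card_cube_hamming_weight)
  moreover have "{w. w \<le> 2*m \<and> m \<le> w \<and> real w \<le> real m + t} = {i. m \<le> i \<and> i \<le> 2*m \<and> real i \<le> real m + t}"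
    by auto
  ultimately have "real (card {x\<in>cube (2*m). m \<le> hamming_weight (2*m) x \<and> real (hamming_weight (2*m) x) \<le> real m + t})
      = (\<Sum>i | m \<le> i \<and> i \<le> 2*m \<and> real i \<le> real m + t. real (2*m choose i))"
    by simp
  then show ?thesis
    using sum_binomial_window_ge[OF t_pos, of m] tail_small unfolding t_def by linarith
qed

lemma binomial_ratio_eq_prod:
  assumes "k \<le> n"
  shows "real (w choose k) / real (n choose k) = (\<Prod>i<k. (real w - real i) / (real n - real i))"
proof -
  have "real (a choose k) = (\<Prod>i<k. real a - real i) / fact k" for a
    by (simp add: binomial_gbinomial gbinomial_prod_rev atLeast0LessThan)
  then show ?thesis by (simp add: prod_dividef)
qed

lemma binomial_ratio_le_power:
  assumes "k \<le> n" "w \<le> n"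
  shows "real (w choose k) / real (n choose k) \<le> (real w / real n) ^ k"
proof (cases "k \<le> w")
  case True
  have "(\<Prod>i<k. (real w - real i) / (real n - real i)) \<le> (\<Prod>i<k. real w / real n)"
  proof (rule prod_mono)
    fix i assume "i \<in> {..<k}"
    then have "real i < real n" "real i \<le> real w" using assms True by auto
    moreover have "real w * real i \<le> real n * real i" using assms by (simp add: mult_right_mono)
    ultimately show "0 \<le> (real w - real i) / (real n - real i) \<and>
        (real w - real i) / (real n - real i) \<le> real w / real n"
      by (simp add: divide_simps algebra_simps)
  qed
  then show ?thesis using binomial_ratio_eq_prod[OF assms(1)] by simp
qed (simp add: binomial_eq_0)

lemma power_le_binomial_ratio:
  assumes "k \<le> w" "w \<le> n"
  shows "((real w - real k) / real n) ^ k \<le> real (w choose k) / real (n choose k)"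
proof -
  have "(\<Prod>i<k. (real w - real k) / real n) \<le> (\<Prod>i<k. (real w - real i) / (real n - real i))"
  proof (rule prod_mono)
    fix i assume "i \<in> {..<k}"
    then have i: "real i < real k" "real i < real n" using assms by auto
    have "(real w - real k) / real n \<le> (real w - real k) / (real n - real i)"
      using assms i by (intro divide_left_mono) auto
    also have "\<dots> \<le> (real w - real i) / (real n - real i)"
      using i by (intro divide_right_mono) auto
    finally show "0 \<le> (real w - real k) / real n \<and>
        (real w - real k) / real n \<le> (real w - real i) / (real n - real i)"
      using assms by simp
  qed
  then show ?thesis using binomial_ratio_eq_prod[of k n w] assms by simp
qed

lemma one_plus_inverse_power_le_3: "0 < k \<Longrightarrow> (1 + 1 / real k) ^ k \<le> 3"
proof -
  assume "0 < k"
  have "(1 + 1 / real k) ^ k \<le> exp (1 / real k) ^ k"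
    using exp_ge_add_one_self[of "1 / real k"] by (intro power_mono) auto
  also have "\<dots> = exp 1" using \<open>0 < k\<close> by (simp flip: exp_of_nat_mult)
  also have "\<dots> \<le> 3" by (rule exp_le)
  finally show ?thesis .
qed

lemma binomial_ratio_near_half_bounds:
  fixes k w :: nat
  defines "m \<equiv> real (2 ^ (k - 1))"
  assumes k: "0 < k" "4 * k ^ 2 \<le> 2 ^ k" and w: "m \<le> real w" "real w \<le> m + m / real k"
  shows "1/2 \<le> 2 ^ k * (real (w choose k) / real (2 ^ k choose k))"
    and "2 ^ k * (real (w choose k) / real (2 ^ k choose k)) \<le> 3"
proof -
  have n: "real (2 ^ k) = 2 * m"
    unfolding m_def using k(1) by (simp flip: power_Suc)
  have "0 < m" unfolding m_def by simp
  have sq: "4 * real k ^ 2 \<le> 2 * m" using k(2) n by (metis of_nat_le_iff of_nat_mult of_nat_numeral of_nat_power)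
  then have k_sq: "real k * real k / m \<le> 1/2"
    using \<open>0 < m\<close> by (simp add: divide_le_eq power2_eq_square)
  have "k \<le> k ^ 2" using k(1) by (simp add: power2_eq_square)
  then have "real k \<le> real k ^ 2" by (metis of_nat_le_iff of_nat_power)
  then have "real k \<le> m" using sq by linarith
  have "m / real k \<le> m" using k(1) \<open>0 < m\<close> by (simp add: divide_le_eq)
  then have "w \<le> 2 ^ k" "k \<le> w" using w n \<open>real k \<le> m\<close> by linarith+
  have "real (w choose k) / real (2 ^ k choose k) \<le> (real w / (2 * m)) ^ k"
    using binomial_ratio_le_power[of k "2 ^ k" w] \<open>k \<le> w\<close> \<open>w \<le> 2 ^ k\<close> n by simp
  also have "\<dots> \<le> ((1 + 1 / real k) / 2) ^ k"
    using w \<open>0 < m\<close> by (intro power_mono) (auto simp: field_simps)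
  also have "\<dots> \<le> 3 / 2 ^ k"
    using one_plus_inverse_power_le_3[OF k(1)] by (simp add: power_divide divide_right_mono)
  finally show "2 ^ k * (real (w choose k) / real (2 ^ k choose k)) \<le> 3"
    by (simp add: field_simps)
  have "1/2 \<le> 1 - real k * (real k / m)" using k_sq by simp
  also have "\<dots> \<le> (1 - real k / m) ^ k"
    using Bernoulli_inequality[of "- (real k / m)" k] \<open>real k \<le> m\<close> \<open>0 < m\<close> by simp
  also have "\<dots> = 2 ^ k * ((m - real k) / (2 * m)) ^ k"
  proof -
    have half: "(1 - real k / m) / 2 = (m - real k) / (2 * m)" using \<open>0 < m\<close> by (simp add: field_simps)
    have "(1 - real k / m) ^ k = 2 ^ k * ((1 - real k / m) / 2) ^ k" by (simp add: power_divide)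
    then show ?thesis unfolding half .
  qed
  also have "\<dots> \<le> 2 ^ k * ((real w - real k) / (2 * m)) ^ k"
  proof -
    have "0 \<le> (m - real k) / (2 * m)" "(m - real k) / (2 * m) \<le> (real w - real k) / (2 * m)"
      using w \<open>0 < m\<close> \<open>real k \<le> m\<close> by (simp_all add: divide_right_mono)
    then show ?thesis using power_mono by simp
  qed
  also have "\<dots> \<le> 2 ^ k * (real (w choose k) / real (2 ^ k choose k))"
    using mult_left_mono[OF power_le_binomial_ratio[OF \<open>k \<le> w\<close> \<open>w \<le> 2 ^ k\<close>], of "2 ^ k"] n
    by simp
  finally show "1/2 \<le> 2 ^ k * (real (w choose k) / real (2 ^ k choose k))" .
qed

(* Writing the number of trials as 4q lets Bernoulli's inequality give (1 - p)^q >= 1/4. *)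
lemma one_success_prob_ge:
  fixes p :: real and q :: nat
  assumes "0 \<le> p" "1/2 \<le> real (4*q) * p" "real (4*q) * p \<le> 3"
  shows "1/512 \<le> real (4*q) * p * (1 - p) ^ (4*q - 1)"
proof -
  have "1 \<le> q" using assms by (cases q) auto
  have "real q * p \<le> 3/4" using assms(3) by simp
  moreover have "p \<le> real q * p" using mult_right_mono[of 1 "real q" p] \<open>1 \<le> q\<close> assms(1) by simp
  ultimately have "p \<le> 1" by linarith
  have "1/4 \<le> (1 - p) ^ q"
    using Bernoulli_inequality[of "-p" q] \<open>p \<le> 1\<close> \<open>real q * p \<le> 3/4\<close> by simp
  then have "(1/4) ^ 4 \<le> ((1 - p) ^ q) ^ 4" by (intro power_mono) auto
  also have "\<dots> = (1 - p) ^ (4*q)" by (simp flip: power_mult add: mult.commute)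
  also have "\<dots> \<le> (1 - p) ^ (4*q - 1)" using assms(1) \<open>p \<le> 1\<close> by (intro power_decreasing) auto
  finally have "1/256 \<le> (1 - p) ^ (4*q - 1)" by (simp add: power_divide)
  then have "1/2 * (1/256) \<le> real (4*q) * p * (1 - p) ^ (4*q - 1)"
    using assms by (intro mult_mono) auto
  then show ?thesis by simp
qed

lemma hit_prob_nonneg: "0 \<le> hit_prob n k x"
  unfolding hit_prob_def by simp

lemma hit_prob_le_1: "hit_prob n k x \<le> 1"
  unfolding hit_prob_def
  using binomial_right_mono[OF hamming_weight_le, of n x k] by (auto simp: divide_le_eq_1)

lemma expected_prob_unique_ge:
  assumes k: "0 < k" "4 * k ^ 2 \<le> 2 ^ k"
  shows "1/2048 \<le> expected_prob_unique (2 ^ k) k"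
proof -
  define n :: nat where "n = 2 ^ k"
  define m :: nat where "m = 2 ^ (k - 1)"
  define q :: nat where "q = 2 ^ (k - 2)"
  have "2 \<le> k"
  proof (rule ccontr)
    assume "\<not> 2 \<le> k"
    then have "k = 1" using k(1) by simp
    then show False using k(2) by simp
  qed
  define j where "j = k - 2"
  then have "k = j + 2" using \<open>2 \<le> k\<close> by simp
  then have "n = 2 * m" "n = 4 * q"
    unfolding n_def m_def q_def by (simp_all add: power_add)
  define f where "f x = real n * hit_prob n k x * (1 - hit_prob n k x) ^ (n - 1)" for x
  define R where "R = {x\<in>cube n. m \<le> hamming_weight n x \<and>
    real (hamming_weight n x) \<le> real m + real m / real k}"
  have "4 * k ^ 2 \<le> 2 * m" using k(2) \<open>n = 2 * m\<close> unfolding n_def by simp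
  then have card_R: "2 ^ n / 4 \<le> real (card R)"
    unfolding R_def \<open>n = 2 * m\<close> by (rule card_cube_near_half_weight_ge[OF k(1)])
  have f_R: "1/512 \<le> f x" if "x \<in> R" for x
  proof -
    have "real (4 * q) * hit_prob n k x = 2 ^ k * (real (hamming_weight n x choose k) / real (2 ^ k choose k))"
      unfolding hit_prob_def \<open>n = 4 * q\<close>[symmetric] n_def by simp
    moreover have "real (2 ^ (k - 1)) \<le> real (hamming_weight n x)"
      "real (hamming_weight n x) \<le> real (2 ^ (k - 1)) + real (2 ^ (k - 1)) / real k"
      using that unfolding R_def m_def by auto
    ultimately have "1/2 \<le> real (4 * q) * hit_prob n k x" "real (4 * q) * hit_prob n k x \<le> 3"
      using binomial_ratio_near_half_bounds[OF k] by simp_all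
    then have "1/512 \<le> real (4 * q) * hit_prob n k x * (1 - hit_prob n k x) ^ (4 * q - 1)"
      by (rule one_success_prob_ge[OF hit_prob_nonneg])
    then show ?thesis unfolding f_def \<open>n = 4 * q\<close> .
  qed
  have f_nonneg: "0 \<le> f x" for x
    unfolding f_def using hit_prob_nonneg hit_prob_le_1 by simp
  have "2 ^ n / 4 * (1/512) \<le> real (card R) * (1/512)"
    using card_R by simp
  also have "\<dots> \<le> (\<Sum>x\<in>R. f x)"
    using sum_bounded_below[of R "1/512" f] f_R by simp
  also have "\<dots> \<le> (\<Sum>x\<in>cube n. f x)"
    using f_nonneg by (intro sum_mono2 finite_cube) (simp_all add: R_def)
  finally have "1/2048 \<le> (\<Sum>x\<in>cube n. f x) / 2 ^ n" by simp
  then show ?thesis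
    using expected_prob_unique_eq[of k n] k unfolding f_def n_def by simp
qed

lemma four_square_le_power_of_two: "10 \<le> k \<Longrightarrow> 4 * k ^ 2 \<le> (2::nat) ^ k"
proof (induction k rule: dec_induct)
  case (step k)
  have "10 * k \<le> k * k" using mult_le_mono1[OF step(1), of k] by simp
  moreover have "4 * (Suc k) ^ 2 = 4 * (k * k) + 8 * k + 4" "2 * (4 * k ^ 2) = 8 * (k * k)"
    by (simp_all add: power2_eq_square)
  ultimately have "4 * (Suc k) ^ 2 \<le> 2 * (4 * k ^ 2)" using step(1) by linarith
  also have "\<dots> \<le> 2 * 2 ^ k" using step(3) by simp
  finally show ?case by simp
qed simp

lemma ex_ge_average:
  fixes f :: "'a \<Rightarrow> real"
  assumes "finite A" "A \<noteq> {}" "c \<le> sum f A / card A"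
  shows "\<exists>a\<in>A. c \<le> f a"
proof (rule ccontr)
  assume "\<not> (\<exists>a\<in>A. c \<le> f a)"
  then have "sum f A < card A * c"
    using assms(1,2) by (intro sum_bounded_above_strict) (auto simp: card_gt_0_iff)
  moreover have "card A * c \<le> sum f A"
    using assms by (simp add: card_gt_0_iff pos_le_divide_eq mult.commute)
  ultimately show False by simp
qed

theorem mainTheorem3:
  shows "\<exists>c::real. c > 0 \<and> (\<exists>n0::nat. \<forall>n k::nat. n = 2 ^ k \<and> n \<ge> n0 \<longrightarrow>
           expected_prob_unique n k \<ge> c \<and>
           (\<exists>T \<in> set_tuples n k. prob_unique n T \<ge> c))"
proof -
  have "1/2048 \<le> expected_prob_unique n k \<and> (\<exists>T \<in> set_tuples n k. 1/2048 \<le> prob_unique n T)"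
    if n: "n = 2 ^ k" "1024 \<le> n" for n k :: nat
  proof -
    have "10 \<le> k"
    proof (rule ccontr)
      assume "\<not> 10 \<le> k"
      then have "(2::nat) ^ k \<le> 2 ^ 9" by (intro power_increasing) auto
      then show False using n by simp
    qed
    then have expected: "1/2048 \<le> expected_prob_unique n k"
      using expected_prob_unique_ge four_square_le_power_of_two n(1) by simp
    have "k \<le> n" using n(1) less_exp[of k] by simp
    then have "\<exists>T \<in> set_tuples n k. 1/2048 \<le> prob_unique n T"
      using expected unfolding expected_prob_unique_def
      by (intro ex_ge_average finite_set_tuples set_tuples_nonempty)
    with expected show ?thesis by blast
  qed
  then show ?thesis by (intro exI[of _ "1/2048"] exI[of _ "1024::nat"]) auto
qed
end
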